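(* Let $\mathcal G=\langle V=V_{\mathrm{Min}}\uplus V_{\mathrm{Max}}, V_T, A, E, \omega\rangle$ be a finite weighted game and $c\colon V_T\to\mathbb Z$. Assume that the subgraph induced by $V\setminus V_T$ is strongly connected, that every cycle all of whose vertices lie in $V\setminus V_T$ has negative weight, and that no vertex has value $+\infty$ (with respect to $c$). Then a vertex $v\in V\setminus V_T$ has value $-\infty$ if and only if $v$ does not belong to the attractor of Max to $V_T$.
   Context: A weighted game has vertices $V$ partitioned into vertices of Min and of Max, targets $V_T\subseteq V_{\mathrm{Min}}$, alphabet $A$, edges $E\subseteq V\times A\times V$, weights $\omega\colon E\to\mathbb Z$, and is deadlock-free and deterministic (for each $(v,a)$ at most one $v'$ with $(v,a,v')\in E$). A cycle is a finite sequence of consecutive edges starting and ending at the same vertex (length $\ge 1$); its weight is the sum of its edge weights. A strategy of a player chooses, after each finite play ending in one of its vertices, a letter of an outgoing edge. With target values $c$, the weight of a play is $+\infty$ if it never visits $V_T$, and otherwise the sum of its edge weights up to the first visit of some $t\in V_T$ plus $c(t)$; the value of $v$ is $\inf_{\sigma_{\mathrm{Min}}}\sup_{\sigma_{\mathrm{Max}}}$ (equal to $\sup_{\sigma_{\mathrm{Max}}}\inf_{\sigma_{\mathrm{Min}}}$) of the weight of the outcome from $v$. The attractor of Max to $V_T$ is the set of vertices $v$ from which Max has a strategy such that every play from $v$ conforming to it visits $V_T$. *)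

theory Defs
  imports "HOL-Library.Extended_Real"
begin

record ('v, 'a) wgame =
  Vs    :: "'v set"
  VMin  :: "'v set"
  VMax  :: "'v set"
  VT    :: "'v set"
  Alph  :: "'a set"
  Edges :: "('v \<times> 'a \<times> 'v) set"
  wt    :: "'v \<times> 'a \<times> 'v \<Rightarrow> int"

type_synonym ('v, 'a) edge = "'v \<times> 'a \<times> 'v"

definition esrc :: "('v, 'a) edge \<Rightarrow> 'v" where "esrc e = fst e"
definition elet :: "('v, 'a) edge \<Rightarrow> 'a" where "elet e = fst (snd e)"
definition etgt :: "('v, 'a) edge \<Rightarrow> 'v" where "etgt e = snd (snd e)"

definition finite_wgame :: "('v, 'a) wgame \<Rightarrow> bool" where
  "finite_wgame G \<longleftrightarrow>
     finite (Vs G) \<and> finite (Alph G) \<and>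
     VMin G \<union> VMax G = Vs G \<and> VMin G \<inter> VMax G = {} \<and>
     VT G \<subseteq> VMin G \<and>
     Edges G \<subseteq> Vs G \<times> Alph G \<times> Vs G \<and>
     (\<forall>v\<in>Vs G. \<exists>a v'. (v, a, v') \<in> Edges G) \<and>
     (\<forall>v a v1 v2. (v, a, v1) \<in> Edges G \<longrightarrow> (v, a, v2) \<in> Edges G \<longrightarrow> v1 = v2)"

text \<open>Finite plays (histories): a start vertex and a list of consecutive edges.\<close>
definition hlast :: "'v \<Rightarrow> ('v, 'a) edge list \<Rightarrow> 'v" where
  "hlast v0 es = (if es = [] then v0 else etgt (last es))"

fun is_path :: "('v, 'a) wgame \<Rightarrow> 'v \<Rightarrow> ('v, 'a) edge list \<Rightarrow> bool" where
  "is_path G v [] \<longleftrightarrow> v \<in> Vs G"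
| "is_path G v (e # es) \<longleftrightarrow> e \<in> Edges G \<and> esrc e = v \<and> is_path G (etgt e) es"

type_synonym ('v, 'a) strategy = "'v \<times> ('v, 'a) edge list \<Rightarrow> 'a"

definition valid_strategy :: "('v, 'a) wgame \<Rightarrow> 'v set \<Rightarrow> ('v, 'a) strategy \<Rightarrow> bool" where
  "valid_strategy G P \<sigma> \<longleftrightarrow>
     (\<forall>v0 es. is_path G v0 es \<longrightarrow> hlast v0 es \<in> P \<longrightarrow>
        (\<exists>v'. (hlast v0 es, \<sigma> (v0, es), v') \<in> Edges G))"

definition is_play :: "('v, 'a) wgame \<Rightarrow> 'v \<Rightarrow> (nat \<Rightarrow> ('v, 'a) edge) \<Rightarrow> bool" where
  "is_play G v p \<longleftrightarrow> esrc (p 0) = v \<and> (\<forall>i. p i \<in> Edges G \<and> etgt (p i) = esrc (p (Suc i)))"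

definition conforms :: "'v set \<Rightarrow> ('v, 'a) strategy \<Rightarrow> 'v \<Rightarrow> (nat \<Rightarrow> ('v, 'a) edge) \<Rightarrow> bool" where
  "conforms P \<sigma> v p \<longleftrightarrow> (\<forall>i. esrc (p i) \<in> P \<longrightarrow> elet (p i) = \<sigma> (v, map p [0..<i]))"

fun out_prefix :: "('v, 'a) wgame \<Rightarrow> ('v, 'a) strategy \<Rightarrow> ('v, 'a) strategy \<Rightarrow> 'v \<Rightarrow> nat
                   \<Rightarrow> ('v, 'a) edge list" where
  "out_prefix G sm sM v 0 = []"
| "out_prefix G sm sM v (Suc n) =
     (let es = out_prefix G sm sM v n;
          u = hlast v es;
          a = (if u \<in> VMin G then sm (v, es) else sM (v, es))
      in es @ [(u, a, THE v'. (u, a, v') \<in> Edges G)])"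

definition outcome :: "('v, 'a) wgame \<Rightarrow> ('v, 'a) strategy \<Rightarrow> ('v, 'a) strategy \<Rightarrow> 'v
                      \<Rightarrow> nat \<Rightarrow> ('v, 'a) edge" where
  "outcome G sm sM v i = out_prefix G sm sM v (Suc i) ! i"

definition play_weight :: "('v, 'a) wgame \<Rightarrow> ('v \<Rightarrow> int) \<Rightarrow> (nat \<Rightarrow> ('v, 'a) edge) \<Rightarrow> ereal" where
  "play_weight G c p =
     (if \<exists>i. esrc (p i) \<in> VT G
      then (let k = (LEAST i. esrc (p i) \<in> VT G)
            in ereal (of_int ((\<Sum>i<k. wt G (p i)) + c (esrc (p k)))))
      else \<infinity>)"

definition game_value :: "('v, 'a) wgame \<Rightarrow> ('v \<Rightarrow> int) \<Rightarrow> 'v \<Rightarrow> ereal" where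
  "game_value G c v =
     (INF sm \<in> {s. valid_strategy G (VMin G) s}.
        SUP sM \<in> {s. valid_strategy G (VMax G) s}. play_weight G c (outcome G sm sM v))"

definition max_attractor :: "('v, 'a) wgame \<Rightarrow> 'v set" where
  "max_attractor G = {v \<in> Vs G. \<exists>sM. valid_strategy G (VMax G) sM \<and>
      (\<forall>p. is_play G v p \<longrightarrow> conforms (VMax G) sM v p \<longrightarrow> (\<exists>i. esrc (p i) \<in> VT G))}"

definition nt_edge_rel :: "('v, 'a) wgame \<Rightarrow> ('v \<times> 'v) set" where
  "nt_edge_rel G = {(x, y). x \<in> Vs G - VT G \<and> y \<in> Vs G - VT G \<and> (\<exists>a. (x, a, y) \<in> Edges G)}"

definition nontarget_strongly_connected :: "('v, 'a) wgame \<Rightarrow> bool" where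
  "nontarget_strongly_connected G \<longleftrightarrow>
     (\<forall>u\<in>Vs G - VT G. \<forall>w\<in>Vs G - VT G. (u, w) \<in> (nt_edge_rel G)\<^sup>*)"

definition is_cycle :: "('v, 'a) wgame \<Rightarrow> ('v, 'a) edge list \<Rightarrow> bool" where
  "is_cycle G es \<longleftrightarrow> es \<noteq> [] \<and> set es \<subseteq> Edges G \<and>
     (\<forall>i. Suc i < length es \<longrightarrow> etgt (es ! i) = esrc (es ! Suc i)) \<and>
     etgt (last es) = esrc (hd es)"

definition cycle_weight :: "('v, 'a) wgame \<Rightarrow> ('v, 'a) edge list \<Rightarrow> int" where
  "cycle_weight G es = sum_list (map (wt G) es)"

definition nontarget_cycles_negative :: "('v, 'a) wgame \<Rightarrow> bool" where
  "nontarget_cycles_negative G \<longleftrightarrow>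
     (\<forall>es. is_cycle G es \<longrightarrow> (\<forall>e\<in>set es. esrc e \<notin> VT G \<and> etgt e \<notin> VT G)
           \<longrightarrow> cycle_weight G es < 0)"

end

theory Submission
  imports Defs
begin

text \<open>From a vertex of Max's attractor, Max follows a rank-decreasing strategy that reaches V_T
  within boundedly many moves, so every outcome has weight bounded below by the maximal absolute
  edge and target weights, and the value is finite. Outside the attractor, Min can keep the play
  in the complement of the attractor, which avoids V_T and which Max cannot leave, for as many
  moves n as she likes. Because every cycle avoiding V_T is negative, such a prefix has weight at
  most |V| W + 1 - n/|V|, where W is the largest absolute edge weight. Min then switches to a strategy guaranteeing a finite bound from the
  vertex reached, which exists because no value is +\<infinity>; as n grows the value tends to -\<infinity>.\<close>

lemma edge_sel [simp]: "esrc (x, a, y) = x" "elet (x, a, y) = a" "etgt (x, a, y) = y"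
  by (simp_all add: esrc_def elet_def etgt_def)

lemma edge_eq: "e = (esrc e, elet e, etgt e)"
  by (simp add: esrc_def elet_def etgt_def)

lemma hlast_Nil [simp]: "hlast v [] = v"
  by (simp add: hlast_def)

lemma hlast_Cons [simp]: "hlast v (e # es) = hlast (etgt e) es"
  by (simp add: hlast_def)

lemma hlast_append: "hlast v (xs @ ys) = hlast (hlast v xs) ys"
  by (induction xs arbitrary: v) auto

lemma hlast_snoc [simp]: "hlast v (xs @ [e]) = etgt e"
  by (simp add: hlast_append)

lemma hlast_play_prefix: "is_play G v p \<Longrightarrow> hlast v (map p [0..<i]) = esrc (p i)"
  by (induction i) (auto simp: is_play_def)

lemma is_path_hlast: "is_path G v es \<Longrightarrow> hlast v es \<in> Vs G"
  by (induction es arbitrary: v) auto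

lemma is_path_edges: "is_path G u es \<Longrightarrow> set es \<subseteq> Edges G"
  by (induction es arbitrary: u) auto

lemma is_path_consecutive:
  "is_path G u es \<Longrightarrow> Suc i < length es \<Longrightarrow> etgt (es ! i) = esrc (es ! Suc i)"
proof (induction es arbitrary: u i)
  case (Cons e es)
  then show ?case
    by (cases i; cases es) auto
qed simp

lemma is_path_cycle:
  assumes path: "is_path G w es" and "es \<noteq> []" and closed: "hlast w es = w"
  shows "is_cycle G es"
  unfolding is_cycle_def
proof (intro conjI allI impI)
  show "es \<noteq> []" by fact
  show "set es \<subseteq> Edges G" using path by (rule is_path_edges)
  show "etgt (es ! i) = esrc (es ! Suc i)" if "Suc i < length es" for i
    using path that by (rule is_path_consecutive)
  have "esrc (hd es) = w" using path \<open>es \<noteq> []\<close> by (cases es) auto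
  then show "etgt (last es) = esrc (hd es)"
    using closed \<open>es \<noteq> []\<close> by (simp add: hlast_def)
qed

lemma length_out_prefix [simp]: "length (out_prefix G sm sM v n) = n"
  by (induction n) (auto simp: Let_def)

lemma out_prefix_nth: "i < n \<Longrightarrow> out_prefix G sm sM v n ! i = outcome G sm sM v i"
proof (induction n)
  case (Suc n)
  show ?case
  proof (cases "i < n")
    case True
    then show ?thesis using Suc by (simp add: Let_def nth_append)
  next
    case False
    then have "i = n" using Suc.prems by simp
    then show ?thesis by (simp add: outcome_def)
  qed
qed simp

lemma out_prefix_eq_map: "out_prefix G sm sM v n = map (outcome G sm sM v) [0..<n]"
  by (rule nth_equalityI) (auto simp: out_prefix_nth)

lemma outcome_unfold: "outcome G sm sM v i =
   (let es = map (outcome G sm sM v) [0..<i]; u = hlast v es;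
        a = (if u \<in> VMin G then sm (v, es) else sM (v, es))
    in (u, a, THE v'. (u, a, v') \<in> Edges G))"
  by (simp only: outcome_def out_prefix.simps(2)) (simp add: Let_def nth_append out_prefix_eq_map)

lemma out_prefix_add:
  assumes \<rho>: "\<rho> = out_prefix G sm sM v n"
    and "\<And>es. sm' (hlast v \<rho>, es) = sm (v, \<rho> @ es)"
    and "\<And>es. sM' (hlast v \<rho>, es) = sM (v, \<rho> @ es)"
  shows "out_prefix G sm sM v (n + k) = \<rho> @ out_prefix G sm' sM' (hlast v \<rho>) k"
  by (induction k) (simp_all add: \<rho>[symmetric] assms(2,3) Let_def hlast_append)

lemma outcome_add:
  assumes \<rho>: "\<rho> = out_prefix G sm sM v n"
    and "\<And>es. sm' (hlast v \<rho>, es) = sm (v, \<rho> @ es)"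
    and "\<And>es. sM' (hlast v \<rho>, es) = sM (v, \<rho> @ es)"
  shows "outcome G sm sM v (n + i) = outcome G sm' sM' (hlast v \<rho>) i"
  using out_prefix_add[OF assms, of "Suc i"] by (simp add: outcome_def \<rho> nth_append)

lemma play_weight_shift:
  assumes "\<forall>i<n. esrc (p i) \<notin> VT G"
  shows "play_weight G c p = ereal (of_int (\<Sum>i<n. wt G (p i))) + play_weight G c (\<lambda>i. p (n + i))"
proof (cases "\<exists>i. esrc (p i) \<in> VT G")
  case True
  then obtain i where i: "esrc (p i) \<in> VT G" by blast
  then have "n \<le> i" using assms not_less by blast
  then have hit: "\<exists>i. esrc (p (n + i)) \<in> VT G" using i le_Suc_ex by blast
  define k where "k = (LEAST i. esrc (p (n + i)) \<in> VT G)"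
  have first_hit: "(LEAST i. esrc (p i) \<in> VT G) = n + k"
  proof (rule Least_equality)
    show "esrc (p (n + k)) \<in> VT G" unfolding k_def using hit by (rule LeastI_ex)
    fix m assume m: "esrc (p m) \<in> VT G"
    then have "n \<le> m" using assms not_less by blast
    moreover have "k \<le> m - n" unfolding k_def using m \<open>n \<le> m\<close> by (intro Least_le) simp
    ultimately show "n + k \<le> m" by simp
  qed
  have "(\<Sum>i<n + k. wt G (p i)) = (\<Sum>i<n. wt G (p i)) + (\<Sum>i<k. wt G (p (n + i)))"
    by (induction k) (auto simp: algebra_simps)
  then show ?thesis
    using True hit unfolding play_weight_def Let_def first_hit k_def[symmetric] by simp
next
  case False
  then show ?thesis unfolding play_weight_def by simp
qed

lemma game_value_bounding_strategy:
  assumes "game_value G c w \<noteq> \<infinity>"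
  obtains sm B where "valid_strategy G (VMin G) sm"
    and "\<forall>sM. valid_strategy G (VMax G) sM \<longrightarrow> play_weight G c (outcome G sm sM w) \<le> ereal (of_int B)"
proof -
  have "game_value G c w < \<infinity>" using assms by (simp add: less_top[symmetric])
  then obtain sm where sm: "valid_strategy G (VMin G) sm"
    and "(SUP sM\<in>{s. valid_strategy G (VMax G) s}. play_weight G c (outcome G sm sM w)) < \<infinity>"
    unfolding game_value_def INF_less_iff by blast
  then obtain B :: nat where B:
    "(SUP sM\<in>{s. valid_strategy G (VMax G) s}. play_weight G c (outcome G sm sM w)) < ereal (real B)"
    using less_PInf_Ex_of_nat by (metis less_irrefl)
  have "play_weight G c (outcome G sm sM w) \<le> ereal (of_int (int B))"
    if "valid_strategy G (VMax G) sM" for sM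
  proof -
    have "play_weight G c (outcome G sm sM w)
        \<le> (SUP sM\<in>{s. valid_strategy G (VMax G) s}. play_weight G c (outcome G sm sM w))"
      using that by (intro SUP_upper) simp
    then show ?thesis using B by simp
  qed
  with sm show ?thesis using that[of sm "int B"] by simp
qed

locale finite_weighted_game =
  fixes G :: "('v, 'a) wgame"
  assumes finite_wgame: "finite_wgame G"
begin

lemma finite_Vs: "finite (Vs G)"
  and VMin_Un_VMax: "VMin G \<union> VMax G = Vs G"
  and VMin_Int_VMax: "VMin G \<inter> VMax G = {}"
  and VT_subset_VMin: "VT G \<subseteq> VMin G"
  and Edges_subset: "Edges G \<subseteq> Vs G \<times> Alph G \<times> Vs G"
  and deadlock_free: "\<And>v. v \<in> Vs G \<Longrightarrow> \<exists>a v'. (v, a, v') \<in> Edges G"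
  and deterministic: "\<And>v a v1 v2. (v, a, v1) \<in> Edges G \<Longrightarrow> (v, a, v2) \<in> Edges G \<Longrightarrow> v1 = v2"
  using finite_wgame unfolding finite_wgame_def by blast+

lemma finite_Edges: "finite (Edges G)"
  using Edges_subset finite_Vs finite_wgame finite_subset unfolding finite_wgame_def by blast

lemma edge_Vs: "(x, a, y) \<in> Edges G \<Longrightarrow> x \<in> Vs G \<and> y \<in> Vs G"
  using Edges_subset by auto

lemma the_edge: "(u, a, w) \<in> Edges G \<Longrightarrow> (THE v'. (u, a, v') \<in> Edges G) = w"
  using deterministic by blast

lemma is_path_append: "is_path G v (xs @ ys) \<longleftrightarrow> is_path G v xs \<and> is_path G (hlast v xs) ys"
proof (induction xs arbitrary: v)
  case Nil
  then show ?case by (cases ys) (auto dest: edge_Vs)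
qed auto

lemma is_path_out_prefix:
  assumes "valid_strategy G (VMin G) sm" "valid_strategy G (VMax G) sM" "v \<in> Vs G"
  shows "is_path G v (out_prefix G sm sM v n)"
proof (induction n)
  case 0
  then show ?case using assms(3) by simp
next
  case (Suc n)
  define es where "es = out_prefix G sm sM v n"
  define u where "u = hlast v es"
  define a where "a = (if u \<in> VMin G then sm (v, es) else sM (v, es))"
  have es: "is_path G v es" using Suc es_def by simp
  then have "u \<in> Vs G" unfolding u_def by (rule is_path_hlast)
  then have "\<exists>w. (u, a, w) \<in> Edges G"
    using assms(1,2) es VMin_Un_VMax unfolding valid_strategy_def a_def u_def by auto
  then obtain w where w: "(u, a, w) \<in> Edges G" ..
  have "out_prefix G sm sM v (Suc n) = es @ [(u, a, THE v'. (u, a, v') \<in> Edges G)]"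
    by (simp add: Let_def es_def u_def a_def)
  then have "out_prefix G sm sM v (Suc n) = es @ [(u, a, w)]"
    using the_edge[OF w] by simp
  then show ?case using es w edge_Vs[OF w] by (simp add: is_path_append u_def)
qed

lemma outcome_conforming_play:
  assumes sm: "valid_strategy G (VMin G) sm" and sM: "valid_strategy G (VMax G) sM"
    and v: "v \<in> Vs G"
  shows "is_play G v (outcome G sm sM v)"
    and "conforms (VMin G) sm v (outcome G sm sM v)"
    and "conforms (VMax G) sM v (outcome G sm sM v)"
proof -
  let ?p = "outcome G sm sM v"
  have src: "esrc (?p i) = hlast v (map ?p [0..<i])" for i
    using outcome_unfold[of G sm sM v i] by (simp add: Let_def)
  have "?p i \<in> Edges G" for i
    using is_path_out_prefix[OF sm sM v, of "Suc i"] by (simp add: out_prefix_eq_map is_path_append)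
  then show "is_play G v ?p"
    unfolding is_play_def using src[of 0] src[of "Suc _"] by simp
  show "conforms (VMin G) sm v ?p" "conforms (VMax G) sM v ?p"
    unfolding conforms_def
    using outcome_unfold[of G sm sM _ _] src VMin_Int_VMax by (auto simp: Let_def)
qed

inductive attracted :: "nat \<Rightarrow> 'v \<Rightarrow> bool" where
  target: "v \<in> VT G \<Longrightarrow> attracted n v"
| max_step: "v \<in> VMax G \<Longrightarrow> (v, a, w) \<in> Edges G \<Longrightarrow> attracted n w \<Longrightarrow> attracted (Suc n) v"
| min_step: "v \<in> VMin G \<Longrightarrow> v \<in> Vs G \<Longrightarrow> (\<forall>a w. (v, a, w) \<in> Edges G \<longrightarrow> attracted n w)
    \<Longrightarrow> attracted (Suc n) v"
| later: "attracted n v \<Longrightarrow> attracted (Suc n) v"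

lemma attracted_mono: "attracted n v \<Longrightarrow> n \<le> m \<Longrightarrow> attracted m v"
  by (induction m) (auto intro: attracted.later simp: le_Suc_eq)

lemma attracted_0_VT: "attracted 0 v \<Longrightarrow> v \<in> VT G"
  by (cases rule: attracted.cases) auto

definition attr_set :: "'v set" where
  "attr_set = {v \<in> Vs G. \<exists>n. attracted n v}"

definition trap_set :: "'v set" where
  "trap_set = Vs G - attr_set"

lemma VT_subset_attr_set: "VT G \<subseteq> attr_set"
  using VT_subset_VMin VMin_Un_VMax unfolding attr_set_def by (auto intro: attracted.target)

lemma trap_set_not_VT: "x \<in> trap_set \<Longrightarrow> x \<notin> VT G"
  using VT_subset_attr_set unfolding trap_set_def by auto

lemma trap_max_edge: "x \<in> VMax G \<Longrightarrow> x \<in> trap_set \<Longrightarrow> (x, a, y) \<in> Edges G \<Longrightarrow> y \<in> trap_set"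
  unfolding trap_set_def attr_set_def using edge_Vs[of x a y] by (auto intro: attracted.max_step)

lemma trap_min_edge:
  assumes "x \<in> VMin G" "x \<in> trap_set"
  shows "\<exists>a y. (x, a, y) \<in> Edges G \<and> y \<in> trap_set"
proof (rule ccontr)
  assume "\<not> ?thesis"
  then have succ_attracted: "\<exists>n. attracted n w" if "(x, a, w) \<in> Edges G" for a w
    using that edge_Vs unfolding trap_set_def attr_set_def by blast
  define N where "N = Max ((\<lambda>e. LEAST n. attracted n (etgt e)) ` Edges G)"
  have "attracted N w" if e: "(x, a, w) \<in> Edges G" for a w
  proof (rule attracted_mono)
    show "attracted (LEAST n. attracted n w) w"
      using succ_attracted[OF e] by (rule LeastI_ex)
    show "(LEAST n. attracted n w) \<le> N"
      unfolding N_def using e finite_Edges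
      by (intro Max_ge) (auto intro: image_eqI[where x = "(x, a, w)"])
  qed
  then have "attracted (Suc N) x"
    using assms VMin_Un_VMax unfolding trap_set_def by (intro attracted.min_step) auto
  then show False using assms unfolding trap_set_def attr_set_def by auto
qed

text \<open>The letters chosen below are outgoing from every vertex, so the strategies built from
  them are valid everywhere; the guards only constrain them in the trap or the attractor.\<close>

definition trap_move :: "'v \<Rightarrow> 'a" where
  "trap_move x = (SOME a. \<exists>y. (x, a, y) \<in> Edges G \<and> (x \<in> trap_set \<longrightarrow> y \<in> trap_set))"

definition trap_strategy :: "('v, 'a) strategy" where
  "trap_strategy = (\<lambda>(v0, es). trap_move (hlast v0 es))"

lemma trap_move_edge:
  assumes "x \<in> VMin G"
  shows "\<exists>y. (x, trap_move x, y) \<in> Edges G \<and> (x \<in> trap_set \<longrightarrow> y \<in> trap_set)"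
proof -
  have "\<exists>a y. (x, a, y) \<in> Edges G \<and> (x \<in> trap_set \<longrightarrow> y \<in> trap_set)"
    using trap_min_edge[OF assms] deadlock_free[of x] assms VMin_Un_VMax by blast
  then show ?thesis unfolding trap_move_def by (rule someI_ex[where P = "\<lambda>a. \<exists>y. _ a y"])
qed

lemma trap_strategy_valid: "valid_strategy G (VMin G) trap_strategy"
  unfolding valid_strategy_def trap_strategy_def using trap_move_edge by auto

lemma play_stays_in_trap:
  assumes play: "is_play G v p" and "v \<in> trap_set"
    and trap_moves: "\<forall>i<n. esrc (p i) \<in> VMin G \<longrightarrow> elet (p i) = trap_move (esrc (p i))"
  shows "i \<le> n \<Longrightarrow> esrc (p i) \<in> trap_set"
proof (induction i)
  case 0
  then show ?case using play \<open>v \<in> trap_set\<close> by (simp add: is_play_def)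
next
  case (Suc i)
  let ?x = "esrc (p i)"
  have x: "?x \<in> trap_set" using Suc by simp
  have e: "(?x, elet (p i), etgt (p i)) \<in> Edges G" and next_src: "etgt (p i) = esrc (p (Suc i))"
    using play edge_eq[of "p i"] by (auto simp: is_play_def)
  have "?x \<in> Vs G" using x unfolding trap_set_def by simp
  then consider "?x \<in> VMin G" | "?x \<in> VMax G" using VMin_Un_VMax by blast
  then show ?case
  proof cases
    case 1
    then have "elet (p i) = trap_move ?x" using trap_moves Suc by simp
    then show ?thesis using trap_move_edge[OF 1] x e deterministic next_src by metis
  next
    case 2
    then show ?thesis using trap_max_edge[OF 2 x e] next_src by simp
  qed
qed

definition attr_rank :: "'v \<Rightarrow> nat" where
  "attr_rank x = (LEAST n. attracted n x)"

lemma attr_rank_attracted: "x \<in> attr_set \<Longrightarrow> attracted (attr_rank x) x"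
  unfolding attr_set_def attr_rank_def by (auto intro: LeastI)

lemma attr_rank_Suc:
  assumes "x \<in> attr_set" "x \<notin> VT G"
  obtains m where "attr_rank x = Suc m" "attracted (Suc m) x" "\<not> attracted m x"
proof (cases "attr_rank x")
  case 0
  then show ?thesis using attr_rank_attracted[OF assms(1)] attracted_0_VT assms(2) by auto
next
  case (Suc m)
  moreover have "\<not> attracted m x"
    using Suc not_less_Least[of m "\<lambda>n. attracted n x"] unfolding attr_rank_def by simp
  ultimately show ?thesis using that attr_rank_attracted[OF assms(1)] by simp
qed

definition attr_move :: "'v \<Rightarrow> 'a" where
  "attr_move x = (SOME a. \<exists>w. (x, a, w) \<in> Edges G \<and>
     (x \<in> attr_set - VT G \<longrightarrow> attracted (attr_rank x - 1) w))"

definition attr_strategy :: "('v, 'a) strategy" where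
  "attr_strategy = (\<lambda>(v0, es). attr_move (hlast v0 es))"

lemma attr_move_edge:
  assumes "x \<in> VMax G"
  shows "\<exists>w. (x, attr_move x, w) \<in> Edges G \<and>
    (x \<in> attr_set - VT G \<longrightarrow> attracted (attr_rank x - 1) w)"
proof -
  have "\<exists>a w. (x, a, w) \<in> Edges G \<and> (x \<in> attr_set - VT G \<longrightarrow> attracted (attr_rank x - 1) w)"
  proof (cases "x \<in> attr_set - VT G")
    case True
    then obtain m where m: "attr_rank x = Suc m" "attracted (Suc m) x" "\<not> attracted m x"
      using attr_rank_Suc by blast
    from m(2) have "\<exists>a w. (x, a, w) \<in> Edges G \<and> attracted m w"
      by (cases rule: attracted.cases) (use True m(3) assms VMin_Int_VMax in auto)
    then show ?thesis using m(1) by auto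
  next
    case False
    then show ?thesis using deadlock_free[of x] assms VMin_Un_VMax by blast
  qed
  then show ?thesis unfolding attr_move_def by (rule someI_ex[where P = "\<lambda>a. \<exists>w. _ a w"])
qed

lemma attr_strategy_valid: "valid_strategy G (VMax G) attr_strategy"
  unfolding valid_strategy_def attr_strategy_def using attr_move_edge by auto

lemma attr_rank_decreases:
  assumes x: "x \<in> attr_set" "x \<notin> VT G" and e: "(x, a, y) \<in> Edges G"
    and max_move: "x \<in> VMax G \<Longrightarrow> a = attr_move x"
  shows "y \<in> attr_set \<and> attr_rank y < attr_rank x"
proof -
  obtain m where m: "attr_rank x = Suc m" "attracted (Suc m) x" "\<not> attracted m x"
    using attr_rank_Suc[OF x] by blast
  from m(2) have "attracted m y"
  proof (cases rule: attracted.cases)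
    case max_step
    then obtain w where "(x, attr_move x, w) \<in> Edges G" "attracted m w"
      using attr_move_edge[of x] x m(1) by auto
    then show ?thesis using max_move max_step e deterministic by metis
  qed (use x m(3) e in auto)
  moreover have "y \<in> Vs G" using edge_Vs[OF e] by simp
  ultimately show ?thesis using m(1) unfolding attr_set_def attr_rank_def
    by (auto intro: Least_le le_less_trans)
qed

lemma attr_strategy_reaches_VT:
  assumes play: "is_play G v p" and "v \<in> attr_set"
    and conf: "conforms (VMax G) attr_strategy v p"
  shows "\<exists>i\<le>attr_rank v. esrc (p i) \<in> VT G"
proof -
  have rank_bound: "(\<forall>j<i. esrc (p j) \<notin> VT G) \<longrightarrow>
      esrc (p i) \<in> attr_set \<and> attr_rank (esrc (p i)) + i \<le> attr_rank v" for i
  proof (induction i)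
    case 0
    then show ?case using play \<open>v \<in> attr_set\<close> by (simp add: is_play_def)
  next
    case (Suc i)
    show ?case
    proof
      assume avoid: "\<forall>j<Suc i. esrc (p j) \<notin> VT G"
      let ?x = "esrc (p i)"
      have x: "?x \<in> attr_set" "attr_rank ?x + i \<le> attr_rank v" using Suc avoid by auto
      have e: "(?x, elet (p i), etgt (p i)) \<in> Edges G" and next_src: "etgt (p i) = esrc (p (Suc i))"
        using play edge_eq[of "p i"] by (auto simp: is_play_def)
      have "?x \<in> VMax G \<Longrightarrow> elet (p i) = attr_move ?x"
        using conf hlast_play_prefix[OF play, of i] unfolding conforms_def attr_strategy_def by auto
      then have "etgt (p i) \<in> attr_set \<and> attr_rank (etgt (p i)) < attr_rank ?x"
        using attr_rank_decreases[OF x(1) _ e] avoid by auto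
      then show "esrc (p (Suc i)) \<in> attr_set \<and> attr_rank (esrc (p (Suc i))) + Suc i \<le> attr_rank v"
        using x next_src by auto
    qed
  qed
  show ?thesis
  proof (rule ccontr)
    let ?r = "attr_rank v"
    assume "\<not> ?thesis"
    then have "esrc (p ?r) \<in> attr_set" "attr_rank (esrc (p ?r)) = 0" "esrc (p ?r) \<notin> VT G"
      using rank_bound[of ?r] by auto
    then show False using attr_rank_attracted attracted_0_VT by fastforce
  qed
qed

lemma max_attractor_eq: "max_attractor G = attr_set"
proof
  show "attr_set \<subseteq> max_attractor G"
    using attr_strategy_reaches_VT attr_strategy_valid
    unfolding max_attractor_def attr_set_def by blast
next
  show "max_attractor G \<subseteq> attr_set"
  proof
    fix v assume "v \<in> max_attractor G"
    then obtain sM where sM: "valid_strategy G (VMax G) sM" and v: "v \<in> Vs G"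
      and forces: "\<forall>p. is_play G v p \<longrightarrow> conforms (VMax G) sM v p \<longrightarrow> (\<exists>i. esrc (p i) \<in> VT G)"
      unfolding max_attractor_def by blast
    show "v \<in> attr_set"
    proof (rule ccontr)
      let ?p = "outcome G trap_strategy sM v"
      assume "v \<notin> attr_set"
      then have "v \<in> trap_set" using v unfolding trap_set_def by simp
      note p = outcome_conforming_play[OF trap_strategy_valid sM v]
      obtain i where "esrc (?p i) \<in> VT G" using forces p by blast
      moreover have "esrc (?p i) \<in> trap_set"
        using play_stays_in_trap[OF p(1) \<open>v \<in> trap_set\<close>, of i] p(2) hlast_play_prefix[OF p(1)]
        unfolding conforms_def trap_strategy_def by auto
      ultimately show False using trap_set_not_VT by blast
    qed
  qed
qed

definition max_abs_weight :: int where
  "max_abs_weight = Max (insert 0 ((\<lambda>e. \<bar>wt G e\<bar>) ` Edges G))"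

lemma abs_wt_le_max_abs_weight: "e \<in> Edges G \<Longrightarrow> \<bar>wt G e\<bar> \<le> max_abs_weight"
  unfolding max_abs_weight_def using finite_Edges by auto

lemma max_abs_weight_nonneg: "0 \<le> max_abs_weight"
  unfolding max_abs_weight_def using finite_Edges by auto

lemma path_weight_le: "is_path G u es \<Longrightarrow> sum_list (map (wt G) es) \<le> int (length es) * max_abs_weight"
  using sum_list_mono[of es "wt G" "\<lambda>_. max_abs_weight"] is_path_edges abs_wt_le_max_abs_weight
  by (fastforce simp: sum_list_triv abs_le_iff)

lemma long_path_has_cycle:
  assumes path: "is_path G u es" and long: "card (Vs G) < length es"
  obtains xs ys zs where "es = xs @ ys @ zs" "is_cycle G ys" "length ys \<le> card (Vs G)"
    "is_path G u (xs @ zs)"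
proof -
  let ?n = "card (Vs G)"
  define pos where "pos i = hlast u (take i es)" for i
  have "pos i \<in> Vs G" for i
    using path is_path_append[of u "take i es" "drop i es"] is_path_hlast unfolding pos_def by auto
  then have "card (pos ` {0..?n}) \<le> ?n"
    using finite_Vs by (intro card_mono) auto
  then have "\<not> inj_on pos {0..?n}"
    by (auto dest: card_image)
  then obtain i j where ij: "i < j" "j \<le> ?n" "pos i = pos j"
    unfolding inj_on_def by (metis atLeastAtMost_iff linorder_neqE_nat)
  define xs where "xs = take i es"
  define ys where "ys = take (j - i) (drop i es)"
  define zs where "zs = drop j es"
  have "ys @ zs = drop i es"
    using ij unfolding ys_def zs_def by (metis append_take_drop_id drop_drop le_add_diff_inverse2 less_imp_le)
  then have split: "es = xs @ ys @ zs" by (simp add: xs_def)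
  have "take j es = take (i + (j - i)) es" using ij by simp
  then have "take j es = xs @ ys" unfolding xs_def ys_def by (simp add: take_add)
  then have last_ys: "hlast (pos i) ys = pos j"
    unfolding pos_def xs_def by (simp add: hlast_append)
  have "length ys = j - i" using ij long unfolding ys_def by simp
  then have ys: "ys \<noteq> []" "length ys \<le> ?n" using ij by auto
  have "hlast u xs = pos i" unfolding pos_def xs_def by simp
  then have "is_path G u xs" "is_path G (pos i) ys" "is_path G (pos j) zs"
    using path last_ys unfolding split is_path_append hlast_append by auto
  then show ?thesis
    using that[OF split is_path_cycle[of G "pos i" ys] ys(2)] ys(1) last_ys ij(3) \<open>hlast u xs = pos i\<close>
    by (simp add: is_path_append)
qed

text \<open>Cutting a negative cycle of length at most |V| out of a path avoiding V_T lowers its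
  weight by at least 1 and its length by at most |V|, so |V| times the weight plus the length
  does not increase; a path of length at most |V| gives the bound directly.\<close>

lemma nontarget_path_weight:
  assumes neg: "nontarget_cycles_negative G"
    and "is_path G u es" and "\<forall>e\<in>set es. esrc e \<notin> VT G \<and> etgt e \<notin> VT G"
  shows "int (card (Vs G)) * sum_list (map (wt G) es) + int (length es)
    \<le> int (card (Vs G)) * (int (card (Vs G)) * max_abs_weight + 1)"
  using assms(2,3)
proof (induction "length es" arbitrary: es rule: less_induct)
  case less
  define N where "N = int (card (Vs G))"
  show ?case
  proof (cases "length es \<le> card (Vs G)")
    case True
    have "sum_list (map (wt G) es) \<le> int (length es) * max_abs_weight"
      using less.prems(1) by (rule path_weight_le)
    also have "\<dots> \<le> N * max_abs_weight"
      using True max_abs_weight_nonneg unfolding N_def by (simp add: mult_right_mono)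
    finally have "N * sum_list (map (wt G) es) \<le> N * (N * max_abs_weight)"
      unfolding N_def by (simp add: mult_left_mono)
    then show ?thesis using True unfolding N_def by (simp add: algebra_simps)
  next
    case False
    then obtain xs ys zs where split: "es = xs @ ys @ zs" and "is_cycle G ys"
      and short: "length ys \<le> card (Vs G)" and path: "is_path G u (xs @ zs)"
      using long_path_has_cycle[OF less.prems(1)] by (metis not_le)
    have "\<forall>e\<in>set ys. esrc e \<notin> VT G \<and> etgt e \<notin> VT G"
      using less.prems(2) split by simp
    then have "sum_list (map (wt G) ys) \<le> -1"
      using neg \<open>is_cycle G ys\<close> unfolding nontarget_cycles_negative_def cycle_weight_def by force
    then have "N * sum_list (map (wt G) ys) \<le> N * -1"
      unfolding N_def by (intro mult_left_mono) auto
    then have cycle: "N * sum_list (map (wt G) ys) + int (length ys) \<le> 0"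
      using short unfolding N_def by simp
    have "length (xs @ zs) < length es"
      using split \<open>is_cycle G ys\<close> by (auto simp: is_cycle_def)
    moreover have "\<forall>e\<in>set (xs @ zs). esrc e \<notin> VT G \<and> etgt e \<notin> VT G"
      using less.prems(2) split by auto
    ultimately have "N * sum_list (map (wt G) (xs @ zs)) + int (length (xs @ zs))
        \<le> N * (N * max_abs_weight + 1)"
      using less.hyps path unfolding N_def by blast
    with cycle show ?thesis unfolding N_def[symmetric] split by (simp add: algebra_simps)
  qed
qed

definition max_abs_target :: "('v \<Rightarrow> int) \<Rightarrow> int" where
  "max_abs_target c = Max (insert 0 ((\<lambda>t. \<bar>c t\<bar>) ` VT G))"

lemma abs_target_le_max_abs_target: "t \<in> VT G \<Longrightarrow> \<bar>c t\<bar> \<le> max_abs_target c"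
proof -
  have "finite (VT G)"
    using finite_Vs VT_subset_VMin VMin_Un_VMax by (blast intro: finite_subset)
  then show "t \<in> VT G \<Longrightarrow> \<bar>c t\<bar> \<le> max_abs_target c"
    unfolding max_abs_target_def by auto
qed

lemma play_weight_lower_bound:
  assumes play: "is_play G v p" and "esrc (p i) \<in> VT G" "i \<le> K"
  shows "ereal (of_int (- (int K * max_abs_weight + max_abs_target c))) \<le> play_weight G c p"
proof -
  let ?W = max_abs_weight
  define k where "k = (LEAST i. esrc (p i) \<in> VT G)"
  have "k \<le> K" unfolding k_def using assms(2,3) by (meson Least_le order_trans)
  then have "- (int K * ?W) \<le> - (int k * ?W)"
    using max_abs_weight_nonneg by (simp add: mult_right_mono)
  also have "\<dots> = (\<Sum>j<k. - ?W)" by simp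
  also have "\<dots> \<le> (\<Sum>j<k. wt G (p j))"
    using abs_wt_le_max_abs_weight play unfolding is_play_def
    by (intro sum_mono) (metis abs_le_iff minus_le_iff)
  finally have "- (int K * ?W) \<le> (\<Sum>j<k. wt G (p j))" .
  moreover have "esrc (p k) \<in> VT G" unfolding k_def using assms(2) by (rule LeastI)
  then have "- max_abs_target c \<le> c (esrc (p k))"
    using abs_target_le_max_abs_target[of _ c] by fastforce
  ultimately have "- (int K * ?W + max_abs_target c) \<le> (\<Sum>j<k. wt G (p j)) + c (esrc (p k))"
    by linarith
  moreover have "play_weight G c p = ereal (of_int ((\<Sum>j<k. wt G (p j)) + c (esrc (p k))))"
    unfolding play_weight_def Let_def k_def[symmetric] using assms(2) by (simp only: if_P exI)
  ultimately show ?thesis by (simp only: ereal_less_eq of_int_le_iff)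
qed

lemma game_value_attr_set_gt_minf:
  assumes "v \<in> attr_set"
  shows "game_value G c v \<noteq> -\<infinity>"
proof -
  define K where "K = Max (attr_rank ` Vs G)"
  let ?lower = "ereal (of_int (- (int K * max_abs_weight + max_abs_target c)))"
  have v: "v \<in> Vs G" using assms attr_set_def by auto
  have "?lower \<le> game_value G c v"
    unfolding game_value_def
  proof (rule INF_greatest)
    fix sm assume "sm \<in> {s. valid_strategy G (VMin G) s}"
    then have p: "is_play G v (outcome G sm attr_strategy v)"
      "conforms (VMax G) attr_strategy v (outcome G sm attr_strategy v)"
      using outcome_conforming_play[OF _ attr_strategy_valid v] by auto
    obtain i where "i \<le> attr_rank v" "esrc (outcome G sm attr_strategy v i) \<in> VT G"
      using attr_strategy_reaches_VT[OF p(1) assms p(2)] by blast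
    moreover have "attr_rank v \<le> K" unfolding K_def using v finite_Vs by simp
    ultimately have "?lower \<le> play_weight G c (outcome G sm attr_strategy v)"
      using play_weight_lower_bound[OF p(1)] by simp
    then show "?lower \<le> (SUP sM\<in>{s. valid_strategy G (VMax G) s}. play_weight G c (outcome G sm sM v))"
      using attr_strategy_valid by (intro SUP_upper2[of attr_strategy]) auto
  qed
  then show ?thesis by auto
qed

lemma uniformly_bounding_strategies:
  assumes "\<forall>v\<in>Vs G. game_value G c v \<noteq> \<infinity>"
  obtains S M where "\<forall>w\<in>Vs G. valid_strategy G (VMin G) (S w)"
    and "\<forall>w\<in>Vs G. \<forall>sM. valid_strategy G (VMax G) sM \<longrightarrow>
      play_weight G c (outcome G (S w) sM w) \<le> ereal (of_int M)"
proof -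
  have "\<exists>sm B. valid_strategy G (VMin G) sm \<and>
      (\<forall>sM. valid_strategy G (VMax G) sM \<longrightarrow> play_weight G c (outcome G sm sM w) \<le> ereal (of_int B))"
    if w: "w \<in> Vs G" for w
    using game_value_bounding_strategy assms w by metis
  then obtain S B where S: "\<forall>w\<in>Vs G. valid_strategy G (VMin G) (S w)"
    and B: "\<forall>w\<in>Vs G. \<forall>sM. valid_strategy G (VMax G) sM \<longrightarrow>
      play_weight G c (outcome G (S w) sM w) \<le> ereal (of_int (B w))"
    by metis
  define M where "M = Max (B ` Vs G)"
  have "B w \<le> M" if "w \<in> Vs G" for w
    unfolding M_def using that finite_Vs by simp
  then have "\<forall>w\<in>Vs G. \<forall>sM. valid_strategy G (VMax G) sM \<longrightarrow>
      play_weight G c (outcome G (S w) sM w) \<le> ereal (of_int M)"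
    using B by (meson ereal_less_eq(3) of_int_le_iff order_trans)
  with S show ?thesis using that by blast
qed

text \<open>The fallback for other start vertices only makes the shifted strategy valid everywhere.\<close>

definition shift_strategy :: "'v \<Rightarrow> ('v, 'a) edge list \<Rightarrow> ('v, 'a) strategy \<Rightarrow> ('v, 'a) strategy" where
  "shift_strategy v \<rho> \<sigma> = (\<lambda>(x, es). if x = hlast v \<rho> then \<sigma> (v, \<rho> @ es) else \<sigma> (x, es))"

lemma shift_strategy_valid:
  assumes "valid_strategy G P \<sigma>" and "is_path G v \<rho>"
  shows "valid_strategy G P (shift_strategy v \<rho> \<sigma>)"
  unfolding valid_strategy_def
proof (intro allI impI)
  fix x es assume path: "is_path G x es" and "hlast x es \<in> P"
  show "\<exists>v'. (hlast x es, shift_strategy v \<rho> \<sigma> (x, es), v') \<in> Edges G"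
  proof (cases "x = hlast v \<rho>")
    case True
    then have "is_path G v (\<rho> @ es)" "hlast v (\<rho> @ es) = hlast x es"
      using assms(2) path by (simp_all add: is_path_append hlast_append)
    then have "\<exists>v'. (hlast x es, \<sigma> (v, \<rho> @ es), v') \<in> Edges G"
      using assms(1) \<open>hlast x es \<in> P\<close> unfolding valid_strategy_def by metis
    then show ?thesis using True by (simp add: shift_strategy_def)
  next
    case False
    then show ?thesis
      using assms(1) path \<open>hlast x es \<in> P\<close> unfolding valid_strategy_def shift_strategy_def by auto
  qed
qed

definition switch_strategy :: "('v \<Rightarrow> ('v, 'a) strategy) \<Rightarrow> nat \<Rightarrow> ('v, 'a) strategy" where
  "switch_strategy S n = (\<lambda>(v0, es).
     if length es < n then trap_move (hlast v0 es)
     else S (hlast v0 (take n es)) (hlast v0 (take n es), drop n es))"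

lemma switch_strategy_valid:
  assumes "\<forall>w\<in>Vs G. valid_strategy G (VMin G) (S w)"
  shows "valid_strategy G (VMin G) (switch_strategy S n)"
  unfolding valid_strategy_def
proof (intro allI impI)
  fix v0 es assume path: "is_path G v0 es" and min: "hlast v0 es \<in> VMin G"
  show "\<exists>v'. (hlast v0 es, switch_strategy S n (v0, es), v') \<in> Edges G"
  proof (cases "length es < n")
    case True
    then show ?thesis using trap_move_edge[OF min] by (auto simp: switch_strategy_def)
  next
    case False
    define w where "w = hlast v0 (take n es)"
    have "is_path G v0 (take n es)" "is_path G w (drop n es)"
      using path is_path_append[of v0 "take n es" "drop n es"] unfolding w_def by auto
    moreover have "hlast w (drop n es) = hlast v0 es"
      unfolding w_def by (simp add: hlast_append[symmetric])
    ultimately show ?thesis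
      using assms min False is_path_hlast
      unfolding valid_strategy_def switch_strategy_def w_def by fastforce
  qed
qed

text \<open>After the first n moves, the rest of the outcome is an outcome of S u from the vertex u
  reached, against Max's strategy shifted by the prefix played.\<close>

lemma switch_strategy_weight:
  assumes neg: "nontarget_cycles_negative G"
    and S: "\<forall>w\<in>Vs G. valid_strategy G (VMin G) (S w)"
    and M: "\<forall>w\<in>Vs G. \<forall>sM. valid_strategy G (VMax G) sM \<longrightarrow>
      play_weight G c (outcome G (S w) sM w) \<le> ereal (of_int M)"
    and v: "v \<in> trap_set" and sM: "valid_strategy G (VMax G) sM"
  shows "\<exists>P. int (card (Vs G)) * P + int n \<le> int (card (Vs G)) * (int (card (Vs G)) * max_abs_weight + 1)
    \<and> play_weight G c (outcome G (switch_strategy S n) sM v) \<le> ereal (of_int (P + M))"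
proof -
  let ?p = "outcome G (switch_strategy S n) sM v"
  define \<rho> where "\<rho> = out_prefix G (switch_strategy S n) sM v n"
  define u where "u = hlast v \<rho>"
  define P where "P = (\<Sum>i<n. wt G (?p i))"
  have vV: "v \<in> Vs G" using v trap_set_def by auto
  note p = outcome_conforming_play[OF switch_strategy_valid[OF S] sM vV]
  have "\<forall>i<n. esrc (?p i) \<in> VMin G \<longrightarrow> elet (?p i) = trap_move (esrc (?p i))"
    using p(2) hlast_play_prefix[OF p(1)] unfolding conforms_def switch_strategy_def by simp
  then have in_trap: "i \<le> n \<Longrightarrow> esrc (?p i) \<in> trap_set" for i
    using play_stays_in_trap[OF p(1) v] by blast
  have \<rho>: "\<rho> = map ?p [0..<n]" "is_path G v \<rho>"
    unfolding \<rho>_def using is_path_out_prefix[OF switch_strategy_valid[OF S] sM vV]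
    by (simp_all add: out_prefix_eq_map)
  have "u \<in> trap_set"
    using in_trap[of n] hlast_play_prefix[OF p(1)] \<rho>(1) unfolding u_def by simp
  then have uV: "u \<in> Vs G" unfolding trap_set_def by simp
  have avoid: "\<forall>e\<in>set \<rho>. esrc e \<notin> VT G \<and> etgt e \<notin> VT G"
    using in_trap trap_set_not_VT p(1) \<rho>(1) unfolding is_play_def
    by (auto simp flip: Suc_le_eq)
  have "P = sum_list (map (wt G) \<rho>)"
    unfolding P_def \<rho>(1) by (simp add: interv_sum_list_conv_sum_set_nat atLeast0LessThan)
  then have bound: "int (card (Vs G)) * P + int n
      \<le> int (card (Vs G)) * (int (card (Vs G)) * max_abs_weight + 1)"
    using nontarget_path_weight[OF neg \<rho>(2) avoid] by (simp add: \<rho>(1))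
  have "S u (u, es) = switch_strategy S n (v, \<rho> @ es)" for es
    using \<rho>(1) by (simp add: switch_strategy_def u_def)
  then have "?p (n + i) = outcome G (S u) (shift_strategy v \<rho> sM) u i" for i
    using outcome_add[OF \<rho>_def, of "S u" "shift_strategy v \<rho> sM"]
    by (simp add: shift_strategy_def u_def)
  then have "(\<lambda>i. ?p (n + i)) = outcome G (S u) (shift_strategy v \<rho> sM) u" by blast
  then have "play_weight G c (\<lambda>i. ?p (n + i)) \<le> ereal (of_int M)"
    using M uV shift_strategy_valid[OF sM \<rho>(2)] by simp
  moreover have "play_weight G c ?p = ereal (of_int P) + play_weight G c (\<lambda>i. ?p (n + i))"
    unfolding P_def using in_trap trap_set_not_VT by (intro play_weight_shift) auto
  ultimately have "play_weight G c ?p \<le> ereal (of_int (P + M))"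
    by (metis add_left_mono plus_ereal.simps(1) of_int_add)
  with bound show ?thesis by blast
qed

lemma game_value_trap_set_minf:
  assumes neg: "nontarget_cycles_negative G"
    and finite_values: "\<forall>v\<in>Vs G. game_value G c v \<noteq> \<infinity>" and v: "v \<in> trap_set"
  shows "game_value G c v = -\<infinity>"
proof (rule ereal_bot)
  fix r :: real
  obtain S M where S: "\<forall>w\<in>Vs G. valid_strategy G (VMin G) (S w)"
    and M: "\<forall>w\<in>Vs G. \<forall>sM. valid_strategy G (VMax G) sM \<longrightarrow>
      play_weight G c (outcome G (S w) sM w) \<le> ereal (of_int M)"
    using uniformly_bounding_strategies[OF finite_values] by blast
  define N where "N = int (card (Vs G))"
  have "N > 0" using v finite_Vs unfolding N_def trap_set_def by (auto simp: card_gt_0_iff)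
  define m where "m = nat \<lceil>real_of_int (N * max_abs_weight + 1 + M) - r\<rceil>"
  define n where "n = nat N * m"
  have "game_value G c v
      \<le> (SUP sM\<in>{s. valid_strategy G (VMax G) s}. play_weight G c (outcome G (switch_strategy S n) sM v))"
    unfolding game_value_def using switch_strategy_valid[OF S] by (intro INF_lower) simp
  also have "\<dots> \<le> ereal r"
  proof (rule SUP_least)
    fix sM assume "sM \<in> {s. valid_strategy G (VMax G) s}"
    then obtain P where "N * P + int n \<le> N * (N * max_abs_weight + 1)"
      and weight: "play_weight G c (outcome G (switch_strategy S n) sM v) \<le> ereal (of_int (P + M))"
      using switch_strategy_weight[OF neg S M v] unfolding N_def by blast
    then have "N * P \<le> N * (N * max_abs_weight + 1 - int m)"
      using \<open>N > 0\<close> unfolding n_def by (simp add: algebra_simps)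
    then have "P \<le> N * max_abs_weight + 1 - int m" using \<open>N > 0\<close> by simp
    moreover have "real_of_int (N * max_abs_weight + 1 + M) - r \<le> real m"
      unfolding m_def by (rule real_nat_ceiling_ge)
    ultimately have "real_of_int (P + M) \<le> r" by linarith
    then show "play_weight G c (outcome G (switch_strategy S n) sM v) \<le> ereal r"
      using weight by (meson ereal_less_eq(3) order_trans)
  qed
  finally show "game_value G c v \<le> ereal r" .
qed

end

theorem proposition3:
  fixes G :: "('v, 'a) wgame" and c :: "'v \<Rightarrow> int"
  assumes "finite_wgame G"
    and "nontarget_strongly_connected G"
    and "nontarget_cycles_negative G"
    and "\<forall>v\<in>Vs G. game_value G c v \<noteq> \<infinity>"
  shows "\<forall>v\<in>Vs G - VT G. game_value G c v = -\<infinity> \<longleftrightarrow> v \<notin> max_attractor G"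
proof -
  interpret finite_weighted_game G by unfold_locales (rule assms(1))
  show ?thesis
    unfolding max_attractor_eq
    using game_value_attr_set_gt_minf game_value_trap_set_minf[OF assms(3,4)]
    unfolding trap_set_def by blast
qed

end
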